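(* Let $\mathcal{L}\in\mathbb{R}^{N_1\times N_2\times N_3}$ be any tensor. Then $$\frac{\mathrm{inc}(\mathcal{L})}{\sqrt{N_3}}\le\xi(\mathcal{L})\le 2\,\mathrm{inc}(\mathcal{L}).$$
   Context: For $\mathcal{A}\in\mathbb{R}^{N_1\times N_2\times N_3}$ write $A^{(k)}=\mathcal{A}(:,:,k)$ for its frontal slices. $\mathrm{bcirc}(\mathcal{A})\in\mathbb{R}^{N_1N_3\times N_2N_3}$ is the block circulant matrix whose $(i,j)$ block is $A^{(((i-j)\bmod N_3)+1)}$; $\mathrm{unfold}$ stacks the frontal slices vertically, $\mathrm{fold}$ is its inverse, and the t-product is $\mathcal{A}*\mathcal{B}=\mathrm{fold}(\mathrm{bcirc}(\mathcal{A})\,\mathrm{unfold}(\mathcal{B}))$. The transpose $\mathcal{A}^\top$ transposes each frontal slice and reverses the order of slices $2,\dots,N_3$. The identity tensor has first frontal slice the identity and other slices zero; f-diagonal means every frontal slice is diagonal. Every $\mathcal{L}$ of tubal rank $R$ has a skinny t-SVD $\mathcal{L}=\mathcal{U}*\mathcal{S}*\mathcal{V}^\top$ with $\mathcal{U}\in\mathbb{R}^{N_1\times R\times N_3}$, $\mathcal{V}\in\mathbb{R}^{N_2\times R\times N_3}$, $\mathcal{U}^\top*\mathcal{U}=\mathcal{V}^\top*\mathcal{V}=\mathcal{I}$, $\mathcal{S}$ f-diagonal. Tensor spectral norm $\|\mathcal{A}\|=\|\mathrm{bcirc}(\mathcal{A})\|$; $\|\cdot\|_\infty$, $\|\cdot\|_F$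 are the entrywise max-absolute-value and Frobenius norms. $T(\mathcal{L})=\{\mathcal{U}*\mathcal{Y}^\top+\mathcal{W}*\mathcal{V}^\top:\mathcal{Y}\in\mathbb{R}^{N_2\times R\times N_3},\mathcal{W}\in\mathbb{R}^{N_1\times R\times N_3}\}$ and $\xi(\mathcal{L})=\max_{\mathcal{N}\in T(\mathcal{L}),\|\mathcal{N}\|\le1}\|\mathcal{N}\|_\infty$. For $N\in\{N_1,N_2\}$ and $1\le n\le N$, let $\mathring{e}_n\in\mathbb{R}^{N\times1\times N_3}$ be the tensor with $(n,1,1)$ entry $1$ and all other entries $0$. With $\mathcal{P}_{\mathcal{U}}=\mathcal{U}*\mathcal{U}^\top$ and $\mathcal{P}_{\mathcal{V}}=\mathcal{V}*\mathcal{V}^\top$ (projections onto $\mathrm{span}(\mathcal{U})$, $\mathrm{span}(\mathcal{V})$), set $\beta(\mathrm{span}(\mathcal{U}))=\max_{1\le n\le N_1}\|\mathcal{P}_{\mathcal{U}}*\mathring{e}_n\|_F$, $\beta(\mathrm{span}(\mathcal{V}))=\max_{1\le n\le N_2}\|\mathcal{P}_{\mathcal{V}}*\mathring{e}_n\|_F$, and $\mathrm{inc}(\mathcal{L})=\max\{\beta(\mathrm{span}(\mathcal{U})),\beta(\mathrm{span}(\mathcal{V}))\}$. *)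

theory Defs
  imports Complex_Main "Jordan_Normal_Form.DL_Rank"
begin

text \<open>Third-order real tensors of size N1 x N2 x N3 are represented as functions
  nat => nat => nat => real, 0-indexed, that vanish outside the index box.\<close>

type_synonym tensor = "nat \<Rightarrow> nat \<Rightarrow> nat \<Rightarrow> real"
type_synonym rmat = "nat \<Rightarrow> nat \<Rightarrow> real"

definition tens :: "nat \<Rightarrow> nat \<Rightarrow> nat \<Rightarrow> tensor set" where
  "tens N1 N2 N3 = {A. \<forall>i j k. \<not> (i < N1 \<and> j < N2 \<and> k < N3) \<longrightarrow> A i j k = 0}"

text \<open>block circulant matrix (N1*N3) x (N2*N3): block (p,q) is slice ((p - q) mod N3)\<close>
definition bcirc :: "nat \<Rightarrow> nat \<Rightarrow> nat \<Rightarrow> tensor \<Rightarrow> rmat" where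
  "bcirc N1 N2 N3 A r c =
     (if r < N1 * N3 \<and> c < N2 * N3
      then A (r mod N1) (c mod N2) ((r div N1 + N3 - c div N2) mod N3) else 0)"

definition unfold :: "nat \<Rightarrow> nat \<Rightarrow> nat \<Rightarrow> tensor \<Rightarrow> rmat" where
  "unfold N1 N2 N3 A r c =
     (if r < N1 * N3 \<and> c < N2 then A (r mod N1) c (r div N1) else 0)"

definition fold :: "nat \<Rightarrow> nat \<Rightarrow> nat \<Rightarrow> rmat \<Rightarrow> tensor" where
  "fold N1 N2 N3 M i j k = (if i < N1 \<and> j < N2 \<and> k < N3 then M (k * N1 + i) j else 0)"

definition matmul :: "nat \<Rightarrow> rmat \<Rightarrow> rmat \<Rightarrow> rmat" where
  "matmul n M P r c = (\<Sum>l<n. M r l * P l c)"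

text \<open>t-product of A (N1 x N2 x N3) and B (N2 x N4 x N3)\<close>
definition tprod :: "nat \<Rightarrow> nat \<Rightarrow> nat \<Rightarrow> nat \<Rightarrow> tensor \<Rightarrow> tensor \<Rightarrow> tensor" where
  "tprod N1 N2 N4 N3 A B =
     fold N1 N4 N3 (matmul (N2 * N3) (bcirc N1 N2 N3 A) (unfold N2 N4 N3 B))"

definition ttrans :: "nat \<Rightarrow> nat \<Rightarrow> nat \<Rightarrow> tensor \<Rightarrow> tensor" where
  "ttrans N1 N2 N3 A i j k =
     (if i < N2 \<and> j < N1 \<and> k < N3 then A j i ((N3 - k) mod N3) else 0)"

definition tadd :: "tensor \<Rightarrow> tensor \<Rightarrow> tensor" where
  "tadd A B i j k = A i j k + B i j k"

definition tident :: "nat \<Rightarrow> nat \<Rightarrow> tensor" where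
  "tident N N3 i j k = (if i < N \<and> i = j \<and> k = 0 \<and> 0 < N3 then 1 else 0)"

definition fdiag :: "tensor \<Rightarrow> bool" where
  "fdiag S \<longleftrightarrow> (\<forall>i j k. i \<noteq> j \<longrightarrow> S i j k = 0)"

definition opnorm :: "nat \<Rightarrow> nat \<Rightarrow> rmat \<Rightarrow> real" where
  "opnorm m n M = Sup {sqrt (\<Sum>r<m. (\<Sum>c<n. M r c * x c)\<^sup>2) | x. (\<Sum>c<n. (x c)\<^sup>2) \<le> 1}"

definition tspec :: "nat \<Rightarrow> nat \<Rightarrow> nat \<Rightarrow> tensor \<Rightarrow> real" where
  "tspec N1 N2 N3 A = opnorm (N1 * N3) (N2 * N3) (bcirc N1 N2 N3 A)"

definition tfro :: "nat \<Rightarrow> nat \<Rightarrow> nat \<Rightarrow> tensor \<Rightarrow> real" where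
  "tfro N1 N2 N3 A = sqrt (\<Sum>i<N1. \<Sum>j<N2. \<Sum>k<N3. (A i j k)\<^sup>2)"

definition tinf :: "nat \<Rightarrow> nat \<Rightarrow> nat \<Rightarrow> tensor \<Rightarrow> real" where
  "tinf N1 N2 N3 A = Max (insert 0 {\<bar>A i j k\<bar> | i j k. i < N1 \<and> j < N2 \<and> k < N3})"

text \<open>tubal rank: maximal rank of the frontal slices of the DFT along the third mode\<close>
definition fslice :: "nat \<Rightarrow> nat \<Rightarrow> nat \<Rightarrow> tensor \<Rightarrow> nat \<Rightarrow> complex mat" where
  "fslice N1 N2 N3 A k = mat N1 N2 (\<lambda>(i, j).
     \<Sum>m<N3. complex_of_real (A i j m) * cis (- 2 * pi * real k * real m / real N3))"

definition tubal_rank :: "nat \<Rightarrow> nat \<Rightarrow> nat \<Rightarrow> tensor \<Rightarrow> nat" where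
  "tubal_rank N1 N2 N3 A =
     Max (insert 0 {vec_space.rank N1 (fslice N1 N2 N3 A k) | k. k < N3})"

definition skinny_tsvd :: "nat \<Rightarrow> nat \<Rightarrow> nat \<Rightarrow> tensor \<Rightarrow> nat \<Rightarrow> tensor \<Rightarrow> tensor \<Rightarrow> tensor \<Rightarrow> bool" where
  "skinny_tsvd N1 N2 N3 L R U S V \<longleftrightarrow>
     R = tubal_rank N1 N2 N3 L \<and>
     U \<in> tens N1 R N3 \<and> S \<in> tens R R N3 \<and> V \<in> tens N2 R N3 \<and>
     L = tprod N1 R N2 N3 (tprod N1 R R N3 U S) (ttrans N2 R N3 V) \<and>
     tprod R N1 R N3 (ttrans N1 R N3 U) U = tident R N3 \<and>
     tprod R N2 R N3 (ttrans N2 R N3 V) V = tident R N3 \<and>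
     fdiag S"

definition tangent :: "nat \<Rightarrow> nat \<Rightarrow> nat \<Rightarrow> nat \<Rightarrow> tensor \<Rightarrow> tensor \<Rightarrow> tensor set" where
  "tangent N1 N2 N3 R U V =
     {tadd (tprod N1 R N2 N3 U (ttrans N2 R N3 Y)) (tprod N1 R N2 N3 W (ttrans N2 R N3 V)) | Y W.
        Y \<in> tens N2 R N3 \<and> W \<in> tens N1 R N3}"

definition xi :: "nat \<Rightarrow> nat \<Rightarrow> nat \<Rightarrow> nat \<Rightarrow> tensor \<Rightarrow> tensor \<Rightarrow> real" where
  "xi N1 N2 N3 R U V =
     Sup {tinf N1 N2 N3 M | M. M \<in> tangent N1 N2 N3 R U V \<and> tspec N1 N2 N3 M \<le> 1}"

text \<open>e_n: N x 1 x N3 tensor with (n,1,1) entry 1 (0-indexed here)\<close>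
definition ecan :: "nat \<Rightarrow> tensor" where
  "ecan n i j k = (if i = n \<and> j = 0 \<and> k = 0 then 1 else 0)"

definition beta :: "nat \<Rightarrow> nat \<Rightarrow> nat \<Rightarrow> tensor \<Rightarrow> real" where
  "beta N R N3 U =
     Max {tfro N 1 N3 (tprod N N 1 N3 (tprod N R N N3 U (ttrans N R N3 U)) (ecan n)) | n. n < N}"

definition inc :: "nat \<Rightarrow> nat \<Rightarrow> nat \<Rightarrow> nat \<Rightarrow> tensor \<Rightarrow> tensor \<Rightarrow> real" where
  "inc N1 N2 N3 R U V = max (beta N1 R N3 U) (beta N2 R N3 V)"

end

theory Submission
  imports Defs "HOL-Analysis.L2_Norm" "HOL-Library.Function_Algebras"
begin

(* Everything is transported to block circulant matrices: bcirc turns the t-product into the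
   matrix product and the tensor transpose into the matrix transpose, so U^T * U = I says that
   Q = bcirc U has orthonormal columns, bcirc (U * U^T) is the orthogonal projection P = Q Q^T, and
   beta (span U) is the largest column norm of P (columns in the same residue class modulo the
   block size have equal norms by circulant symmetry).

   Upper bound: every X = Q Y^T + W Z^T satisfies X = P X + (I - P) X P_Z, so the entry X r c is
   at most ||X|| (||P e_r|| + ||P_Z e_c||) <= beta (span U) + beta (span V) when ||X|| <= 1.

   Lower bound: if Y has the n-th horizontal slice of U as its first one, then bcirc (U * Y^T) is a
   multiple c of P e_n copied into N3 columns.  Its Frobenius norm sqrt N3 * c * ||P e_n|| bounds
   the spectral norm, while its (n,1,1) entry is c * P n n = c * ||P e_n||^2; choosing the spectral
   norm equal to 1 gives an entry ||P e_n|| / sqrt N3.  The V side follows by transposing. *)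

section \<open>Block and cyclic index arithmetic\<close>

lemma sum_blocks:
  fixes f :: "nat \<Rightarrow> 'a::comm_monoid_add"
  shows "(\<Sum>r<m * n. f r) = (\<Sum>p<n. \<Sum>i<m. f (p * m + i))"
proof -
  have "(\<Sum>r<m * n. f r) = (\<Sum>p<n. sum f {p * m..<p * m + m})"
    using sum.nat_group[of f m n] by (simp add: mult.commute)
  also have "\<dots> = (\<Sum>p<n. \<Sum>i<m. f (p * m + i))"
    by (simp add: sum.atLeastLessThan_shift_0 atLeast0LessThan add.commute)
  finally show ?thesis .
qed

lemma block_index_less:
  fixes p i :: nat
  assumes "p < N3" and "i < N1"
  shows "p * N1 + i < N1 * N3"
proof -
  have "Suc p * N1 \<le> N3 * N1"
    using assms(1) by (intro mult_le_mono1) simp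
  then show ?thesis
    using assms(2) by (simp add: mult.commute)
qed

lemma block_index_cases:
  fixes r :: nat
  assumes "r < N1 * N3"
  obtains p i where "r = p * N1 + i" and "p < N3" and "i < N1"
proof
  show "r = r div N1 * N1 + r mod N1" by simp
  show "r div N1 < N3" using assms by (simp add: less_mult_imp_div_less mult.commute)
  show "r mod N1 < N1" using assms by (cases N1) auto
qed

lemma int_cyclic_diff:
  fixes a b N :: nat
  assumes "b \<le> N"
  shows "int ((a + N - b) mod N) = (int a - int b) mod int N"
proof -
  have "int (a + N - b) = (int a - int b) + int N"
    using assms by (simp add: of_nat_diff)
  then show ?thesis by (simp add: zmod_int)
qed

lemma cyclic_diff_add_cancel:
  fixes t b N :: nat
  assumes "t < N" and "b < N"
  shows "((t + b) mod N + N - b) mod N = t"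
proof -
  have "int (((t + b) mod N + N - b) mod N) = (int ((t + b) mod N) - int b) mod int N"
    using assms by (intro int_cyclic_diff) simp
  also have "\<dots> = int t"
    using assms by (simp add: of_nat_mod mod_diff_left_eq)
  finally show ?thesis by simp
qed

lemma add_cyclic_diff_cancel:
  fixes s b N :: nat
  assumes "s < N" and "b < N"
  shows "((s + N - b) mod N + b) mod N = s"
  using assms by (simp add: mod_add_left_eq)

lemma sum_rotate:
  fixes g :: "nat \<Rightarrow> 'a::comm_monoid_add"
  assumes "0 < N"
  shows "(\<Sum>s<N. g s) = (\<Sum>t<N. g ((t + q) mod N))"
proof -
  have "(\<Sum>s<N. g s) = (\<Sum>t<N. g ((t + q mod N) mod N))"
    by (rule sum.reindex_bij_witness[where j = "\<lambda>s. (s + N - q mod N) mod N"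
          and i = "\<lambda>t. (t + q mod N) mod N"])
       (use assms in \<open>auto simp: cyclic_diff_add_cancel add_cyclic_diff_cancel\<close>)
  then show ?thesis by (simp add: mod_add_right_eq)
qed

lemma cyclic_diff_add:
  fixes p q t N :: nat
  assumes "t < N" and "q < N"
  shows "(p + N - (t + q) mod N) mod N = ((p + N - q) mod N + N - t) mod N"
proof -
  have "int ((p + N - (t + q) mod N) mod N) = (int p - int ((t + q) mod N)) mod int N"
    using assms by (intro int_cyclic_diff) simp
  also have "\<dots> = ((int p - int q) mod int N - int t) mod int N"
    by (simp add: of_nat_mod mod_diff_right_eq mod_diff_left_eq algebra_simps)
  also have "\<dots> = int (((p + N - q) mod N + N - t) mod N)"
    using assms by (simp add: int_cyclic_diff)
  finally show ?thesis by simp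
qed

lemma cyclic_diff_neg:
  fixes p q N :: nat
  assumes "p < N" and "q < N"
  shows "(N - (p + N - q) mod N) mod N = (q + N - p) mod N"
proof -
  have "int ((0 + N - (p + N - q) mod N) mod N) = (- int ((p + N - q) mod N)) mod int N"
    using assms by (subst int_cyclic_diff) simp_all
  also have "\<dots> = int ((q + N - p) mod N)"
    using assms by (simp add: int_cyclic_diff mod_simps)
  finally show ?thesis by simp
qed

lemma cyclic_diff_eq_0_iff:
  fixes p q N :: nat
  assumes "p < N" and "q < N"
  shows "(p + N - q) mod N = 0 \<longleftrightarrow> p = q"
  using assms mod_if by force

section \<open>Operator norm and orthogonal projections\<close>

definition mtrans :: "rmat \<Rightarrow> rmat" where
  "mtrans M r c = M c r"

lemma mtrans_mtrans [simp]: "mtrans (mtrans M) = M"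
  by (simp add: fun_eq_iff mtrans_def)

lemma mtrans_matmul: "mtrans (matmul n A B) = matmul n (mtrans B) (mtrans A)"
  by (simp add: fun_eq_iff mtrans_def matmul_def mult.commute)

lemma matmul_assoc: "matmul n (matmul m A B) C = matmul m A (matmul n B C)"
proof (intro ext)
  fix r c
  have "matmul n (matmul m A B) C r c = (\<Sum>l<n. \<Sum>j<m. A r j * B j l * C l c)"
    by (simp add: matmul_def sum_distrib_right)
  also have "\<dots> = (\<Sum>j<m. \<Sum>l<n. A r j * B j l * C l c)"
    by (rule sum.swap)
  also have "\<dots> = matmul m A (matmul n B C) r c"
    by (simp add: matmul_def sum_distrib_left mult.assoc)
  finally show "matmul n (matmul m A B) C r c = matmul m A (matmul n B C) r c" .
qed

lemma matmul_add_left: "matmul n (A + B) C = matmul n A C + matmul n B C"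
  by (simp add: fun_eq_iff matmul_def distrib_right sum.distrib)

lemma matmul_add_right: "matmul n A (B + C) = matmul n A B + matmul n A C"
  by (simp add: fun_eq_iff matmul_def distrib_left sum.distrib)

definition frob :: "nat \<Rightarrow> nat \<Rightarrow> rmat \<Rightarrow> real" where
  "frob m n M = sqrt (\<Sum>r<m. \<Sum>c<n. (M r c)\<^sup>2)"

lemma opnorm_L2_set:
  fixes M :: rmat and m n :: nat
  shows "opnorm m n M = Sup {L2_set (\<lambda>r. \<Sum>c<n. M r c * x c) {..<m} | x. L2_set x {..<n} \<le> 1}"
  by (simp add: opnorm_def L2_set_def)

lemma L2_mat_vec_le_frob:
  fixes M :: rmat and m n :: nat
  shows "L2_set (\<lambda>r. \<Sum>c<n. M r c * x c) {..<m} \<le> frob m n M * L2_set x {..<n}"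
proof -
  have row: "\<bar>\<Sum>c<n. M r c * x c\<bar> \<le> L2_set (M r) {..<n} * L2_set x {..<n}" for r
    using sum_abs[of "\<lambda>c. M r c * x c" "{..<n}"] L2_set_mult_ineq[of "M r" x "{..<n}"]
    by (simp add: abs_mult)
  have "L2_set (\<lambda>r. \<Sum>c<n. M r c * x c) {..<m} = L2_set (\<lambda>r. \<bar>\<Sum>c<n. M r c * x c\<bar>) {..<m}"
    by (simp add: L2_set_def)
  also have "\<dots> \<le> L2_set (\<lambda>r. L2_set (M r) {..<n} * L2_set x {..<n}) {..<m}"
    by (intro L2_set_mono row) simp
  also have "\<dots> = L2_set (\<lambda>r. L2_set (M r) {..<n}) {..<m} * L2_set x {..<n}"
    by (simp add: L2_set_left_distrib)
  also have "L2_set (\<lambda>r. L2_set (M r) {..<n}) {..<m} = frob m n M"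
    by (simp add: L2_set_def frob_def sum_nonneg)
  finally show ?thesis .
qed

lemma frob_nonneg:
  fixes M :: rmat and m n :: nat
  shows "0 \<le> frob m n M"
  by (simp add: frob_def sum_nonneg)

lemma L2_mat_vec_le_frob_unit:
  fixes M :: rmat and m n :: nat
  assumes "L2_set x {..<n} \<le> 1"
  shows "L2_set (\<lambda>r. \<Sum>c<n. M r c * x c) {..<m} \<le> frob m n M"
  using L2_mat_vec_le_frob[where M = M and m = m and n = n and x = x]
    mult_left_le[OF assms frob_nonneg[where M = M and m = m and n = n]]
  by linarith

lemma opnorm_bdd:
  fixes M :: rmat and m n :: nat
  shows "bdd_above {L2_set (\<lambda>r. \<Sum>c<n. M r c * x c) {..<m} | x. L2_set x {..<n} \<le> 1}"
proof (rule bdd_aboveI)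
  fix y
  assume "y \<in> {L2_set (\<lambda>r. \<Sum>c<n. M r c * x c) {..<m} | x. L2_set x {..<n} \<le> 1}"
  then obtain x where "y = L2_set (\<lambda>r. \<Sum>c<n. M r c * x c) {..<m}" and "L2_set x {..<n} \<le> 1"
    by blast
  then show "y \<le> frob m n M"
    by (simp add: L2_mat_vec_le_frob_unit)
qed

lemma L2_mat_vec_le_opnorm_unit:
  fixes M :: rmat and m n :: nat
  assumes "L2_set x {..<n} \<le> 1"
  shows "L2_set (\<lambda>r. \<Sum>c<n. M r c * x c) {..<m} \<le> opnorm m n M"
  unfolding opnorm_L2_set by (rule cSup_upper[OF _ opnorm_bdd]) (use assms in blast)

lemma opnorm_nonneg:
  fixes M :: rmat and m n :: nat
  shows "0 \<le> opnorm m n M"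
  using L2_mat_vec_le_opnorm_unit[where M = M and m = m and n = n and x = "\<lambda>_. 0"] by (simp add: L2_set_def)

lemma opnorm_le_frob:
  fixes M :: rmat and m n :: nat
  shows "opnorm m n M \<le> frob m n M"
  unfolding opnorm_L2_set
proof (rule cSup_least)
  show "{L2_set (\<lambda>r. \<Sum>c<n. M r c * x c) {..<m} | x. L2_set x {..<n} \<le> 1} \<noteq> {}"
    by (auto intro!: exI[of _ "\<lambda>_. 0"] simp: L2_set_def)
next
  fix y
  assume "y \<in> {L2_set (\<lambda>r. \<Sum>c<n. M r c * x c) {..<m} | x. L2_set x {..<n} \<le> 1}"
  then obtain x where "y = L2_set (\<lambda>r. \<Sum>c<n. M r c * x c) {..<m}" and "L2_set x {..<n} \<le> 1"
    by blast
  then show "y \<le> frob m n M"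
    by (simp add: L2_mat_vec_le_frob_unit)
qed

lemma L2_mat_vec_le_opnorm:
  fixes M :: rmat and m n :: nat
  shows "L2_set (\<lambda>r. \<Sum>c<n. M r c * x c) {..<m} \<le> opnorm m n M * L2_set x {..<n}"
proof (cases "L2_set x {..<n} = 0")
  case True
  then have "\<forall>c\<in>{..<n}. x c = 0"
    by (simp add: L2_set_eq_0_iff)
  then show ?thesis
    using True by (simp add: L2_set_def)
next
  case False
  define s where "s = L2_set x {..<n}"
  have "s > 0"
    using False by (simp add: s_def less_le)
  have "L2_set (\<lambda>c. x c / s) {..<n} = 1"
    using L2_set_right_distrib[of "1 / s" x "{..<n}"] \<open>s > 0\<close> by (simp add: s_def)
  then have "L2_set (\<lambda>r. \<Sum>c<n. M r c * (x c / s)) {..<m} \<le> opnorm m n M"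
    by (intro L2_mat_vec_le_opnorm_unit) simp
  moreover have "L2_set (\<lambda>r. \<Sum>c<n. M r c * (x c / s)) {..<m} = L2_set (\<lambda>r. \<Sum>c<n. M r c * x c) {..<m} / s"
    using L2_set_right_distrib[of "1 / s" "\<lambda>r. \<Sum>c<n. M r c * x c" "{..<m}"] \<open>s > 0\<close>
    by (simp add: sum_divide_distrib)
  ultimately show ?thesis
    using \<open>s > 0\<close> by (simp add: s_def pos_divide_le_eq)
qed

lemma abs_bilinear_le_opnorm:
  fixes M :: rmat and m n :: nat
  shows "\<bar>\<Sum>r<m. y r * (\<Sum>c<n. M r c * x c)\<bar> \<le> L2_set y {..<m} * opnorm m n M * L2_set x {..<n}"
proof -
  have "\<bar>\<Sum>r<m. y r * (\<Sum>c<n. M r c * x c)\<bar> \<le> (\<Sum>r<m. \<bar>y r\<bar> * \<bar>\<Sum>c<n. M r c * x c\<bar>)"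
    by (rule order_trans[OF sum_abs]) (simp add: abs_mult)
  also have "\<dots> \<le> L2_set y {..<m} * L2_set (\<lambda>r. \<Sum>c<n. M r c * x c) {..<m}"
    by (rule L2_set_mult_ineq)
  also have "\<dots> \<le> L2_set y {..<m} * (opnorm m n M * L2_set x {..<n})"
    by (intro mult_left_mono L2_mat_vec_le_opnorm) simp
  finally show ?thesis
    by (simp add: mult.assoc)
qed

lemma opnorm_mtrans_le:
  fixes M :: rmat and m n :: nat
  shows "opnorm n m (mtrans M) \<le> opnorm m n M"
  unfolding opnorm_L2_set[where m = n and n = m]
proof (rule cSup_least)
  show "{L2_set (\<lambda>c. \<Sum>r<m. mtrans M c r * y r) {..<n} | y. L2_set y {..<m} \<le> 1} \<noteq> {}"
    by (auto intro!: exI[of _ "\<lambda>_. 0"] simp: L2_set_def)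
next
  fix t
  assume "t \<in> {L2_set (\<lambda>c. \<Sum>r<m. mtrans M c r * y r) {..<n} | y. L2_set y {..<m} \<le> 1}"
  then obtain y where t: "t = L2_set (\<lambda>c. \<Sum>r<m. M r c * y r) {..<n}" and y: "L2_set y {..<m} \<le> 1"
    by (auto simp: mtrans_def)
  define z where "z = (\<lambda>c. \<Sum>r<m. M r c * y r)"
  have tz: "t = L2_set z {..<n}"
    by (simp add: t z_def)
  have "t\<^sup>2 = (\<Sum>c<n. z c * z c)"
    by (simp add: t z_def L2_set_def sum_nonneg power2_eq_square)
  also have "\<dots> = (\<Sum>c<n. (\<Sum>r<m. M r c * y r) * z c)"
    by (simp add: z_def)
  also have "\<dots> = (\<Sum>r<m. y r * (\<Sum>c<n. M r c * z c))"
    unfolding sum_distrib_left sum_distrib_right by (subst sum.swap) (simp add: mult_ac)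
  also have "\<dots> \<le> L2_set y {..<m} * opnorm m n M * t"
    using order_trans[OF abs_ge_self abs_bilinear_le_opnorm[where M = M and m = m and n = n and y = y and x = z]]
    by (simp only: tz)
  also have "\<dots> \<le> opnorm m n M * t"
    using mult_left_le_one_le[OF _ L2_set_nonneg y, of "opnorm m n M * t"]
    by (simp add: tz opnorm_nonneg mult.assoc)
  finally have "t * t \<le> opnorm m n M * t"
    by (simp add: power2_eq_square)
  then show "t \<le> opnorm m n M"
  proof (cases "t = 0")
    case True
    then show ?thesis
      by (simp add: opnorm_nonneg)
  next
    case False
    then have "0 < t"
      by (simp add: tz less_le)
    then show ?thesis
      using \<open>t * t \<le> opnorm m n M * t\<close> mult_right_le_imp_le by blast
  qed
qed

lemma opnorm_mtrans:
  fixes M :: rmat and m n :: nat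
  shows "opnorm n m (mtrans M) = opnorm m n M"
  using opnorm_mtrans_le[where M = M and m = m and n = n] opnorm_mtrans_le[where M = "mtrans M" and m = n and n = m] by simp

definition proj :: "nat \<Rightarrow> rmat \<Rightarrow> rmat" where
  "proj k Q = matmul k Q (mtrans Q)"

definition orthonormal_cols :: "nat \<Rightarrow> nat \<Rightarrow> rmat \<Rightarrow> bool" where
  "orthonormal_cols a k Q \<longleftrightarrow>
     (\<forall>x<k. \<forall>y<k. matmul a (mtrans Q) Q x y = (if x = y then 1 else 0))"

lemma proj_sym: "proj k Q l r = proj k Q r l"
  by (simp add: proj_def matmul_def mtrans_def mult.commute)

lemma mtrans_proj: "mtrans (proj k Q) = proj k Q"
  by (simp add: fun_eq_iff mtrans_def proj_sym)

lemma proj_mul_cols: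
  assumes "orthonormal_cols a k Q" and "y < k"
  shows "matmul a (proj k Q) Q r y = Q r y"
proof -
  have "matmul a (proj k Q) Q r y = (\<Sum>x<k. Q r x * matmul a (mtrans Q) Q x y)"
    by (simp add: proj_def matmul_assoc matmul_def[of k])
  also have "\<dots> = (\<Sum>x<k. if x = y then Q r x else 0)"
    using assms by (intro sum.cong refl) (simp add: orthonormal_cols_def)
  finally show ?thesis
    using assms(2) by simp
qed

lemma proj_mul_range:
  assumes "orthonormal_cols a k Q"
  shows "matmul a (proj k Q) (matmul k Q Y) = matmul k Q Y"
proof (intro ext)
  fix r c
  have "matmul a (proj k Q) (matmul k Q Y) r c = (\<Sum>x<k. matmul a (proj k Q) Q r x * Y x c)"
    by (simp add: matmul_assoc[symmetric] matmul_def[of k])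
  also have "\<dots> = (\<Sum>x<k. Q r x * Y x c)"
    using assms by (intro sum.cong refl) (simp add: proj_mul_cols)
  also have "\<dots> = matmul k Q Y r c"
    by (simp add: matmul_def)
  finally show "matmul a (proj k Q) (matmul k Q Y) r c = matmul k Q Y r c" .
qed

lemma mul_proj_range:
  assumes "orthonormal_cols b k Z"
  shows "matmul b (matmul k W (mtrans Z)) (proj k Z) = matmul k W (mtrans Z)"
proof -
  have "mtrans (matmul b (matmul k W (mtrans Z)) (proj k Z)) = mtrans (matmul k W (mtrans Z))"
    using proj_mul_range[OF assms, of "mtrans W"] by (simp add: mtrans_matmul mtrans_proj)
  then have "mtrans (mtrans (matmul b (matmul k W (mtrans Z)) (proj k Z)))
      = mtrans (mtrans (matmul k W (mtrans Z)))"
    by (rule arg_cong)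
  then show ?thesis
    by simp
qed

lemma proj_diag_nonneg: "0 \<le> proj k Q r r"
  by (simp add: proj_def matmul_def mtrans_def sum_nonneg)

lemma proj_col_sq_sum:
  assumes "orthonormal_cols a k Q"
  shows "(\<Sum>l<a. (proj k Q l r)\<^sup>2) = proj k Q r r"
proof -
  have "(\<Sum>l<a. (proj k Q l r)\<^sup>2) = (\<Sum>l<a. proj k Q r l * proj k Q l r)"
    by (intro sum.cong refl) (simp add: power2_eq_square proj_sym[of k Q l r for l])
  also have "\<dots> = matmul a (proj k Q) (proj k Q) r r"
    by (simp add: matmul_def)
  also have "\<dots> = proj k Q r r"
    using proj_mul_range[OF assms, of "mtrans Q"] by (simp add: proj_def)
  finally show ?thesis .
qed

lemma L2_unit_minus_proj_col_le_1:
  assumes "orthonormal_cols a k Q" and "r < a"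
  shows "L2_set (\<lambda>l. (if l = r then 1 else 0) - proj k Q l r) {..<a} \<le> 1"
proof -
  have "(\<Sum>l<a. ((if l = r then 1 else 0) - proj k Q l r)\<^sup>2)
      = (\<Sum>l<a. (if l = r then 1 - 2 * proj k Q l r else 0) + (proj k Q l r)\<^sup>2)"
    by (intro sum.cong refl) (simp add: power2_diff)
  also have "\<dots> = 1 - 2 * proj k Q r r + (\<Sum>l<a. (proj k Q l r)\<^sup>2)"
    using assms(2) by (simp add: sum.distrib)
  also have "\<dots> = 1 - proj k Q r r"
    by (simp add: proj_col_sq_sum[OF assms(1)])
  also have "\<dots> \<le> 1"
    by (simp add: proj_diag_nonneg)
  finally show ?thesis
    by (simp add: L2_set_def)
qed

lemma L2_set_indicator:
  assumes "finite A" and "c \<in> A"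
  shows "L2_set (\<lambda>m. if m = c then 1 else 0) A = 1"
proof -
  have "(\<Sum>m\<in>A. (if m = c then 1 else 0 :: real)\<^sup>2) = (\<Sum>m\<in>A. if m = c then 1 else 0)"
    by (intro sum.cong refl) simp
  then show ?thesis
    using assms by (simp add: L2_set_def)
qed

lemma tangent_entry_bound:
  assumes Q: "orthonormal_cols a k Q" and Z: "orthonormal_cols b k Z"
    and r: "r < a" and c: "c < b"
    and X: "X = matmul k Q (mtrans Y) + matmul k W (mtrans Z)"
  shows "\<bar>X r c\<bar> \<le> opnorm a b X * (L2_set (\<lambda>l. proj k Q l r) {..<a} + L2_set (\<lambda>m. proj k Z m c) {..<b})"
proof -
  define P where "P = proj k Q"
  define PZ where "PZ = proj k Z"
  define A where "A = matmul k Q (mtrans Y)"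
  define B where "B = matmul k W (mtrans Z)"
  define XP where "XP = matmul b X PZ"
  have PA: "matmul a P A = A"
    unfolding P_def A_def by (rule proj_mul_range[OF Q])
  have BP: "matmul b B PZ = B"
    unfolding PZ_def B_def by (rule mul_proj_range[OF Z])
  have PX: "matmul a P (A + B) = A + matmul a P B"
    by (simp add: matmul_add_right PA)
  have XPZ: "matmul b (A + B) PZ = matmul b A PZ + B"
    by (simp add: matmul_add_left BP)
  have PXP: "matmul a P (matmul b A PZ + B) = matmul b A PZ + matmul a P B"
    by (simp add: matmul_add_right matmul_assoc[symmetric] PA)
  \<comment> \<open>\<open>X = P X + (I - P) X PZ\<close>, because \<open>P Q = Q\<close> and \<open>Z\<^sup>T PZ = Z\<^sup>T\<close>\<close>
  have decomp: "X r c = matmul a P X r c + (XP r c - matmul a P XP r c)"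
    by (simp add: X A_def[symmetric] B_def[symmetric] XP_def PX XPZ PXP)
  have P_col: "matmul a P M r c' = (\<Sum>l<a. P l r * M l c')" for M c'
    unfolding matmul_def by (intro sum.cong refl) (simp add: P_def proj_sym)
  have "matmul a P X r c = (\<Sum>l<a. P l r * (\<Sum>m<b. X l m * (if m = c then 1 else 0)))"
    using c by (simp add: P_col if_distrib cong: if_cong)
  also have "\<bar>\<dots>\<bar> \<le> L2_set (\<lambda>l. P l r) {..<a} * opnorm a b X * L2_set (\<lambda>m. if m = c then 1 else 0) {..<b}"
    by (rule abs_bilinear_le_opnorm)
  also have "L2_set (\<lambda>m. if m = c then 1 else (0::real)) {..<b} = 1"
    using c by (simp add: L2_set_indicator)
  finally have range: "\<bar>matmul a P X r c\<bar> \<le> L2_set (\<lambda>l. P l r) {..<a} * opnorm a b X"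
    by simp
  have delta: "(if l = r then 1 else 0) * t = (if l = r then t else 0)" for l and t :: real
    by simp
  have "XP r c - matmul a P XP r c = (\<Sum>l<a. ((if l = r then 1 else 0) - P l r) * XP l c)"
    using r by (simp add: P_col left_diff_distrib sum_subtractf delta)
  also have "\<dots> = (\<Sum>l<a. ((if l = r then 1 else 0) - P l r) * (\<Sum>m<b. X l m * PZ m c))"
    by (simp add: XP_def matmul_def)
  also have "\<bar>\<dots>\<bar> \<le> L2_set (\<lambda>l. (if l = r then 1 else 0) - P l r) {..<a} * opnorm a b X
      * L2_set (\<lambda>m. PZ m c) {..<b}"
    by (rule abs_bilinear_le_opnorm)
  also have "\<dots> \<le> 1 * opnorm a b X * L2_set (\<lambda>m. PZ m c) {..<b}"
    using L2_unit_minus_proj_col_le_1[OF Q r]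
    by (intro mult_right_mono) (simp_all add: P_def opnorm_nonneg)
  finally have complement: "\<bar>XP r c - matmul a P XP r c\<bar> \<le> opnorm a b X * L2_set (\<lambda>m. PZ m c) {..<b}"
    by simp
  have "\<bar>X r c\<bar> \<le> \<bar>matmul a P X r c\<bar> + \<bar>XP r c - matmul a P XP r c\<bar>"
    unfolding decomp by (rule abs_triangle_ineq)
  also have "\<dots> \<le> opnorm a b X * (L2_set (\<lambda>l. P l r) {..<a} + L2_set (\<lambda>m. PZ m c) {..<b})"
    using range complement by (simp add: distrib_left mult.commute)
  finally show ?thesis
    by (simp add: P_def PZ_def)
qed

section \<open>Block circulant matrices and the t-product\<close>

lemma bcirc_block:
  assumes "p < N3" "i < N1" "q < N3" "j < N2"
  shows "bcirc N1 N2 N3 A (p * N1 + i) (q * N2 + j) = A i j ((p + N3 - q) mod N3)"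
  using assms block_index_less[of p N3 i N1] block_index_less[of q N3 j N2]
  by (simp add: bcirc_def)

lemma bcirc_first_block_col:
  assumes "i < N1" "j < N2" "k < N3"
  shows "bcirc N1 N2 N3 A (k * N1 + i) j = A i j k"
  using assms bcirc_block[of k N3 i N1 0 j N2 A] by simp

lemma unfold_block:
  assumes "p < N3" "i < N1" "j < N2"
  shows "unfold N1 N2 N3 B (p * N1 + i) j = B i j p"
  using assms block_index_less[of p N3 i N1] by (simp add: unfold_def)

lemma bcirc_tprod:
  assumes "0 < N3"
  shows "bcirc N1 N4 N3 (tprod N1 N2 N4 N3 A B) = matmul (N2 * N3) (bcirc N1 N2 N3 A) (bcirc N2 N4 N3 B)"
proof (intro ext)
  fix r c
  show "bcirc N1 N4 N3 (tprod N1 N2 N4 N3 A B) r c = matmul (N2 * N3) (bcirc N1 N2 N3 A) (bcirc N2 N4 N3 B) r c"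
  proof (cases "r < N1 * N3 \<and> c < N4 * N3")
    case False
    then show ?thesis by (auto simp: bcirc_def matmul_def)
  next
    case True
    then obtain p i q j where r: "r = p * N1 + i" "p < N3" "i < N1"
      and c: "c = q * N4 + j" "q < N3" "j < N4"
      by (meson block_index_cases)
    define d where "d = (p + N3 - q) mod N3"
    have "d < N3" using assms by (simp add: d_def)
    have "bcirc N1 N4 N3 (tprod N1 N2 N4 N3 A B) r c
        = (\<Sum>l<N2 * N3. bcirc N1 N2 N3 A (d * N1 + i) l * unfold N2 N4 N3 B l j)"
      using r c \<open>d < N3\<close> by (simp add: bcirc_block d_def tprod_def fold_def matmul_def)
    also have "\<dots> = (\<Sum>t<N3. \<Sum>m<N2. A i m ((d + N3 - t) mod N3) * B m j t)"
      using r c \<open>d < N3\<close> by (simp add: sum_blocks bcirc_block unfold_block)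
    also have "\<dots> = (\<Sum>s<N3. \<Sum>m<N2. A i m ((p + N3 - s) mod N3) * B m j ((s + N3 - q) mod N3))"
      using sum_rotate[OF assms, of "\<lambda>s. \<Sum>m<N2. A i m ((p + N3 - s) mod N3) * B m j ((s + N3 - q) mod N3)" q] c
      by (simp add: cyclic_diff_add_cancel cyclic_diff_add d_def)
    also have "\<dots> = matmul (N2 * N3) (bcirc N1 N2 N3 A) (bcirc N2 N4 N3 B) r c"
      using r c by (simp add: matmul_def sum_blocks bcirc_block)
    finally show ?thesis .
  qed
qed

lemma bcirc_ttrans:
  assumes "0 < N3"
  shows "bcirc N2 N1 N3 (ttrans N1 N2 N3 A) = mtrans (bcirc N1 N2 N3 A)"
proof (intro ext)
  fix r c
  show "bcirc N2 N1 N3 (ttrans N1 N2 N3 A) r c = mtrans (bcirc N1 N2 N3 A) r c"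
  proof (cases "r < N2 * N3 \<and> c < N1 * N3")
    case False
    then show ?thesis by (auto simp: bcirc_def mtrans_def)
  next
    case True
    then obtain p i q j where "r = p * N2 + i" "p < N3" "i < N2" "c = q * N1 + j" "q < N3" "j < N1"
      by (meson block_index_cases)
    then show ?thesis
      using assms by (simp add: bcirc_block ttrans_def mtrans_def cyclic_diff_neg)
  qed
qed

lemma bcirc_tident:
  assumes "0 < N3"
  shows "bcirc R R N3 (tident R N3) r c = (if r < R * N3 \<and> r = c then 1 else 0)"
proof (cases "r < R * N3 \<and> c < R * N3")
  case False
  then show ?thesis by (auto simp: bcirc_def)
next
  case True
  then obtain p i q j where r: "r = p * R + i" "p < N3" "i < R" and c: "c = q * R + j" "q < N3" "j < R"
    by (meson block_index_cases)
  have "p * R + i = q * R + j \<longleftrightarrow> p = q \<and> i = j"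
  proof
    assume "p * R + i = q * R + j"
    then have "(p * R + i) div R = (q * R + j) div R" and "(p * R + i) mod R = (q * R + j) mod R"
      by simp_all
    then show "p = q \<and> i = j"
      using r c by simp
  qed simp
  then show ?thesis
    using r c assms True by (auto simp: bcirc_block tident_def cyclic_diff_eq_0_iff)
qed

lemma bcirc_tadd: "bcirc N1 N2 N3 (tadd A B) = bcirc N1 N2 N3 A + bcirc N1 N2 N3 B"
  by (simp add: fun_eq_iff bcirc_def tadd_def)

lemma tprod_in_tens: "tprod N1 N2 N4 N3 A B \<in> tens N1 N4 N3"
  by (simp add: tens_def tprod_def fold_def)

lemma ttrans_in_tens: "ttrans N1 N2 N3 A \<in> tens N2 N1 N3"
  by (simp add: tens_def ttrans_def)

lemma tens_eq_if_bcirc_eq: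
  assumes "A \<in> tens N1 N2 N3" and "B \<in> tens N1 N2 N3"
    and "bcirc N1 N2 N3 A = bcirc N1 N2 N3 B"
  shows "A = B"
proof (intro ext)
  fix i j k
  show "A i j k = B i j k"
  proof (cases "i < N1 \<and> j < N2 \<and> k < N3")
    case True
    then show ?thesis
      using assms(3) bcirc_first_block_col[of i N1 j N2 k N3] by metis
  next
    case False
    then show ?thesis
      using assms(1,2) by (simp add: tens_def)
  qed
qed

lemma ttrans_tprod:
  assumes "0 < N3"
  shows "ttrans N1 N4 N3 (tprod N1 N2 N4 N3 A B)
       = tprod N4 N2 N1 N3 (ttrans N2 N4 N3 B) (ttrans N1 N2 N3 A)"
  by (rule tens_eq_if_bcirc_eq[OF ttrans_in_tens tprod_in_tens])
     (simp add: assms bcirc_ttrans bcirc_tprod mtrans_matmul)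

lemma ttrans_ttrans:
  assumes "0 < N3" and "A \<in> tens N1 N2 N3"
  shows "ttrans N2 N1 N3 (ttrans N1 N2 N3 A) = A"
  by (rule tens_eq_if_bcirc_eq[OF ttrans_in_tens assms(2)]) (simp add: assms(1) bcirc_ttrans)

lemma ttrans_tadd: "ttrans N1 N2 N3 (tadd A B) = tadd (ttrans N1 N2 N3 A) (ttrans N1 N2 N3 B)"
  by (simp add: fun_eq_iff ttrans_def tadd_def)

lemma tspec_ttrans:
  assumes "0 < N3"
  shows "tspec N2 N1 N3 (ttrans N1 N2 N3 M) = tspec N1 N2 N3 M"
  using assms by (simp add: tspec_def bcirc_ttrans opnorm_mtrans)

lemma bcirc_col_norm_shift:
  assumes "0 < N3" and "q < N3" and "j < N2"
  shows "L2_set (\<lambda>r. bcirc N1 N2 N3 A r (q * N2 + j)) {..<N1 * N3}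
       = L2_set (\<lambda>r. bcirc N1 N2 N3 A r j) {..<N1 * N3}"
proof -
  define g where "g p = (\<Sum>i<N1. (A i j p)\<^sup>2)" for p
  have "(\<Sum>r<N1 * N3. (bcirc N1 N2 N3 A r (q * N2 + j))\<^sup>2) = (\<Sum>p<N3. g ((p + (N3 - q)) mod N3))"
    using assms by (simp add: sum_blocks bcirc_block g_def)
  also have "\<dots> = (\<Sum>p<N3. g p)"
    by (rule sum_rotate[OF assms(1), symmetric])
  also have "\<dots> = (\<Sum>r<N1 * N3. (bcirc N1 N2 N3 A r j)\<^sup>2)"
    using assms by (simp add: sum_blocks bcirc_first_block_col g_def)
  finally show ?thesis
    by (simp add: L2_set_def)
qed

lemma tfro_tprod_ecan:
  assumes "0 < N3" and "n < N"
  shows "tfro N 1 N3 (tprod N N 1 N3 A (ecan n)) = L2_set (\<lambda>r. bcirc N N N3 A r n) {..<N * N3}"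
proof -
  have ecan: "unfold N (Suc 0) N3 (ecan n) l 0 = (if l = n then 1 else 0)" if "l < N * N3" for l
    using that assms by (auto simp: unfold_def ecan_def div_eq_0_iff)
  have entry: "tprod N N (Suc 0) N3 A (ecan n) i 0 k = bcirc N N N3 A (k * N + i) n"
    if "i < N" "k < N3" for i k
  proof -
    have "tprod N N (Suc 0) N3 A (ecan n) i 0 k
        = (\<Sum>l<N * N3. bcirc N N N3 A (k * N + i) l * unfold N (Suc 0) N3 (ecan n) l 0)"
      using that by (simp add: tprod_def fold_def matmul_def)
    also have "\<dots> = (\<Sum>l<N * N3. if l = n then bcirc N N N3 A (k * N + i) l else 0)"
      by (intro sum.cong refl) (simp add: ecan)
    also have "\<dots> = bcirc N N N3 A (k * N + i) n"
      using assms block_index_less[of 0 N3 n N] by simp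
    finally show ?thesis .
  qed
  have "(\<Sum>i<N. \<Sum>j<1. \<Sum>k<N3. (tprod N N 1 N3 A (ecan n) i j k)\<^sup>2)
      = (\<Sum>k<N3. \<Sum>i<N. (bcirc N N N3 A (k * N + i) n)\<^sup>2)"
    by (simp add: entry sum.swap[of _ "{..<N}"])
  also have "\<dots> = (\<Sum>r<N * N3. (bcirc N N N3 A r n)\<^sup>2)"
    by (simp add: sum_blocks)
  finally show ?thesis
    by (simp add: tfro_def L2_set_def)
qed

lemma orthonormal_cols_bcirc:
  assumes "0 < N3" and "tprod R N R N3 (ttrans N R N3 U) U = tident R N3"
  shows "orthonormal_cols (N * N3) (R * N3) (bcirc N R N3 U)"
  using arg_cong[OF assms(2), of "bcirc R R N3"] assms(1)
  by (simp add: orthonormal_cols_def bcirc_tprod bcirc_ttrans bcirc_tident fun_eq_iff)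

lemma bcirc_proj:
  assumes "0 < N3"
  shows "bcirc N N N3 (tprod N R N N3 U (ttrans N R N3 U)) = proj (R * N3) (bcirc N R N3 U)"
  using assms by (simp add: bcirc_tprod bcirc_ttrans proj_def)

lemma proj_col_norm_le_beta:
  assumes "0 < N3" and "r < N * N3"
  shows "L2_set (\<lambda>l. proj (R * N3) (bcirc N R N3 U) l r) {..<N * N3} \<le> beta N R N3 U"
proof -
  obtain q n where r: "r = q * N + n" "q < N3" "n < N"
    using assms(2) by (rule block_index_cases)
  have "L2_set (\<lambda>l. proj (R * N3) (bcirc N R N3 U) l r) {..<N * N3}
      = tfro N 1 N3 (tprod N N 1 N3 (tprod N R N N3 U (ttrans N R N3 U)) (ecan n))"
    using r assms(1) bcirc_col_norm_shift[of N3 q n N N "tprod N R N N3 U (ttrans N R N3 U)"]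
    unfolding tfro_tprod_ecan[OF assms(1) r(3)] by (simp add: bcirc_proj)
  also have "\<dots> \<le> beta N R N3 U"
    unfolding beta_def using r by (intro Max_ge) auto
  finally show ?thesis .
qed

lemma beta_nonneg:
  assumes "0 < N" and "0 < N3"
  shows "0 \<le> beta N R N3 U"
  using order_trans[OF L2_set_nonneg proj_col_norm_le_beta[of N3 0 N]] assms by simp

lemma beta_attained:
  assumes "0 < N" and "0 < N3"
  obtains n where "n < N" and "beta N R N3 U = L2_set (\<lambda>l. proj (R * N3) (bcirc N R N3 U) l n) {..<N * N3}"
proof -
  have "beta N R N3 U \<in> {tfro N 1 N3 (tprod N N 1 N3 (tprod N R N N3 U (ttrans N R N3 U)) (ecan n)) | n. n < N}"
    unfolding beta_def using assms(1) by (intro Max_in) auto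
  then obtain n where "n < N"
    and "beta N R N3 U = tfro N 1 N3 (tprod N N 1 N3 (tprod N R N N3 U (ttrans N R N3 U)) (ecan n))"
    by blast
  then show ?thesis
    using that unfolding tfro_tprod_ecan[OF assms(2) \<open>n < N\<close>] bcirc_proj[OF assms(2)] by blast
qed

section \<open>Bounds on xi\<close>

lemma finite_tinf_set:
  fixes A :: tensor
  shows "finite {\<bar>A i j k\<bar> | i j k. i < N1 \<and> j < N2 \<and> k < N3}"
proof (rule finite_subset)
  show "{\<bar>A i j k\<bar> | i j k. i < N1 \<and> j < N2 \<and> k < N3}
      \<subseteq> (\<lambda>(i, j, k). \<bar>A i j k\<bar>) ` ({..<N1} \<times> {..<N2} \<times> {..<N3})"
  proof (rule subsetI)
    fix x
    assume "x \<in> {\<bar>A i j k\<bar> | i j k. i < N1 \<and> j < N2 \<and> k < N3}"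
    then obtain i j k where "x = \<bar>A i j k\<bar>" "i < N1" "j < N2" "k < N3"
      by blast
    then show "x \<in> (\<lambda>(i, j, k). \<bar>A i j k\<bar>) ` ({..<N1} \<times> {..<N2} \<times> {..<N3})"
      by (intro image_eqI[where x = "(i, j, k)"]) simp_all
  qed
qed simp

lemma abs_le_tinf:
  fixes A :: tensor
  assumes "i < N1" and "j < N2" and "k < N3"
  shows "\<bar>A i j k\<bar> \<le> tinf N1 N2 N3 A"
proof -
  have "\<bar>A i j k\<bar> \<in> insert 0 {\<bar>A i j k\<bar> | i j k. i < N1 \<and> j < N2 \<and> k < N3}"
    using assms by blast
  then show ?thesis
    unfolding tinf_def by (rule Max_ge[rotated]) (simp add: finite_tinf_set)
qed

lemma tinf_le:
  fixes A :: tensor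
  assumes "0 \<le> B" and "\<And>i j k. i < N1 \<Longrightarrow> j < N2 \<Longrightarrow> k < N3 \<Longrightarrow> \<bar>A i j k\<bar> \<le> B"
  shows "tinf N1 N2 N3 A \<le> B"
  unfolding tinf_def
proof (rule Max.boundedI)
  fix t
  assume "t \<in> insert 0 {\<bar>A i j k\<bar> | i j k. i < N1 \<and> j < N2 \<and> k < N3}"
  then show "t \<le> B"
    using assms by blast
qed (simp_all add: finite_tinf_set)

lemma tinf_ttrans:
  assumes "0 < N3"
  shows "tinf N2 N1 N3 (ttrans N1 N2 N3 M) = tinf N1 N2 N3 M"
proof -
  have neg: "(N3 - (N3 - k) mod N3) mod N3 = k" if "k < N3" for k
    using cyclic_diff_neg[of 0 N3 k] that assms by simp
  have "{\<bar>ttrans N1 N2 N3 M i j k\<bar> | i j k. i < N2 \<and> j < N1 \<and> k < N3}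
      = {\<bar>M i j k\<bar> | i j k. i < N1 \<and> j < N2 \<and> k < N3}"
  proof (rule subset_antisym; rule subsetI)
    fix x
    assume "x \<in> {\<bar>ttrans N1 N2 N3 M i j k\<bar> | i j k. i < N2 \<and> j < N1 \<and> k < N3}"
    then obtain i j k where "x = \<bar>M j i ((N3 - k) mod N3)\<bar>" "i < N2" "j < N1" "k < N3"
      by (auto simp: ttrans_def)
    then show "x \<in> {\<bar>M i j k\<bar> | i j k. i < N1 \<and> j < N2 \<and> k < N3}"
      using assms by fastforce
  next
    fix x
    assume "x \<in> {\<bar>M i j k\<bar> | i j k. i < N1 \<and> j < N2 \<and> k < N3}"
    then obtain i j k where "x = \<bar>M i j k\<bar>" "i < N1" "j < N2" "k < N3"
      by blast
    then have "x = \<bar>ttrans N1 N2 N3 M j i ((N3 - k) mod N3)\<bar>"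
      using assms by (simp add: ttrans_def neg)
    then show "x \<in> {\<bar>ttrans N1 N2 N3 M i j k\<bar> | i j k. i < N2 \<and> j < N1 \<and> k < N3}"
      using \<open>i < N1\<close> \<open>j < N2\<close> assms by fastforce
  qed
  then show ?thesis
    by (simp add: tinf_def)
qed

lemma tinf_le_beta_sum:
  assumes "0 < N1" and "0 < N2" and "0 < N3"
    and U: "orthonormal_cols (N1 * N3) (R * N3) (bcirc N1 R N3 U)"
    and V: "orthonormal_cols (N2 * N3) (R * N3) (bcirc N2 R N3 V)"
    and "M \<in> tangent N1 N2 N3 R U V" and "tspec N1 N2 N3 M \<le> 1"
  shows "tinf N1 N2 N3 M \<le> beta N1 R N3 U + beta N2 R N3 V"
proof -
  obtain Y W where M: "M = tadd (tprod N1 R N2 N3 U (ttrans N2 R N3 Y)) (tprod N1 R N2 N3 W (ttrans N2 R N3 V))"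
    using assms(6) by (auto simp: tangent_def)
  define X where "X = bcirc N1 N2 N3 M"
  have X: "X = matmul (R * N3) (bcirc N1 R N3 U) (mtrans (bcirc N2 R N3 Y))
             + matmul (R * N3) (bcirc N1 R N3 W) (mtrans (bcirc N2 R N3 V))"
    using assms(3) by (simp add: X_def M bcirc_tadd bcirc_tprod bcirc_ttrans)
  have "opnorm (N1 * N3) (N2 * N3) X \<le> 1"
    using assms(7) by (simp add: tspec_def X_def)
  have beta_U: "L2_set (\<lambda>l. proj (R * N3) (bcirc N1 R N3 U) l r) {..<N1 * N3} \<le> beta N1 R N3 U"
    if "r < N1 * N3" for r
    using proj_col_norm_le_beta[OF assms(3) that] .
  have beta_V: "L2_set (\<lambda>l. proj (R * N3) (bcirc N2 R N3 V) l c) {..<N2 * N3} \<le> beta N2 R N3 V"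
    if "c < N2 * N3" for c
    using proj_col_norm_le_beta[OF assms(3) that] .
  show ?thesis
  proof (rule tinf_le)
    show "0 \<le> beta N1 R N3 U + beta N2 R N3 V"
      using assms(1-3) by (simp add: beta_nonneg)
  next
    fix i j k
    assume ijk: "i < N1" "j < N2" "k < N3"
    have r: "k * N1 + i < N1 * N3" and c: "j < N2 * N3"
      using ijk block_index_less[of k N3 i N1] block_index_less[of 0 N3 j N2] by simp_all
    have "\<bar>M i j k\<bar> = \<bar>X (k * N1 + i) j\<bar>"
      using ijk by (simp add: X_def bcirc_first_block_col)
    also have "\<dots> \<le> opnorm (N1 * N3) (N2 * N3) X
        * (L2_set (\<lambda>l. proj (R * N3) (bcirc N1 R N3 U) l (k * N1 + i)) {..<N1 * N3}
           + L2_set (\<lambda>m. proj (R * N3) (bcirc N2 R N3 V) m j) {..<N2 * N3})"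
      by (rule tangent_entry_bound[OF U V r c X])
    also have "\<dots> \<le> 1 * (beta N1 R N3 U + beta N2 R N3 V)"
      using \<open>opnorm (N1 * N3) (N2 * N3) X \<le> 1\<close> beta_U[OF r] beta_V[OF c]
      by (intro mult_mono add_mono) (simp_all add: opnorm_nonneg add_nonneg_nonneg)
    finally show "\<bar>M i j k\<bar> \<le> beta N1 R N3 U + beta N2 R N3 V"
      by simp
  qed
qed

lemma tangent_witness_left:
  assumes "0 < N2" and "0 < N3" and U: "orthonormal_cols (N1 * N3) (R * N3) (bcirc N1 R N3 U)"
    and "n < N1"
  obtains M where "M \<in> tangent N1 N2 N3 R U V" and "tspec N1 N2 N3 M \<le> 1"
    and "L2_set (\<lambda>l. proj (R * N3) (bcirc N1 R N3 U) l n) {..<N1 * N3} / sqrt (real N3) \<le> tinf N1 N2 N3 M"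
proof -
  define P where "P = proj (R * N3) (bcirc N1 R N3 U)"
  define s where "s = L2_set (\<lambda>l. P l n) {..<N1 * N3}"
  define c where "c = 1 / (sqrt (real N3) * s)"
  \<comment> \<open>if \<open>s = 0\<close> then \<open>c = 0\<close> (division by zero) and the witness is the zero tensor\<close>
  define Y :: tensor where "Y i j k = (if i = 0 \<and> j < R \<and> k < N3 then c * U n j k else 0)" for i j k
  define Z :: tensor where "Z i j k = 0" for i j k
  define M where "M = tadd (tprod N1 R N2 N3 U (ttrans N2 R N3 Y)) (tprod N1 R N2 N3 Z (ttrans N2 R N3 V))"
  have "M \<in> tangent N1 N2 N3 R U V"
    unfolding tangent_def M_def using assms(1) by (fastforce simp: tens_def Y_def Z_def)
  have Y_row: "bcirc N2 R N3 Y (q * N2 + j) x = (if j = 0 then c * bcirc N1 R N3 U (q * N1 + n) x else 0)"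
    if "q < N3" "j < N2" for q j x
  proof (cases "x < R * N3")
    case True
    then obtain p i where "x = p * R + i" "p < N3" "i < R"
      by (rule block_index_cases)
    then show ?thesis
      using that assms(4) by (simp add: bcirc_block Y_def)
  next
    case False
    then show ?thesis
      by (simp add: bcirc_def)
  qed
  have X: "bcirc N1 N2 N3 M r (q * N2 + j) = (if j = 0 then c * P r (q * N1 + n) else 0)"
    if "q < N3" "j < N2" for r q j
  proof -
    have "bcirc N1 R N3 Z = 0"
      by (simp add: fun_eq_iff bcirc_def Z_def)
    then have "bcirc N1 N2 N3 M r (q * N2 + j)
        = (\<Sum>x<R * N3. bcirc N1 R N3 U r x * bcirc N2 R N3 Y (q * N2 + j) x)"
      using assms(2) by (simp add: M_def bcirc_tadd bcirc_tprod bcirc_ttrans matmul_def mtrans_def)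
    also have "\<dots> = (\<Sum>x<R * N3. bcirc N1 R N3 U r x * (if j = 0 then c * bcirc N1 R N3 U (q * N1 + n) x else 0))"
      using that by (simp add: Y_row)
    also have "\<dots> = (if j = 0 then c * P r (q * N1 + n) else 0)"
      by (simp add: P_def proj_def matmul_def mtrans_def sum_distrib_left mult.left_commute)
    finally show ?thesis .
  qed
  have col_norm: "L2_set (\<lambda>r. P r (q * N1 + n)) {..<N1 * N3} = s" if "q < N3" for q
    using bcirc_col_norm_shift[of N3 q n N1 N1 "tprod N1 R N1 N3 U (ttrans N1 R N3 U)"] that assms
    by (simp add: bcirc_proj P_def s_def)
  have sq_if: "(if b then t else 0)\<^sup>2 = (if b then t\<^sup>2 else (0::real))" for b t
    by simp
  have "(\<Sum>r<N1 * N3. \<Sum>c'<N2 * N3. (bcirc N1 N2 N3 M r c')\<^sup>2)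
      = (\<Sum>r<N1 * N3. \<Sum>q<N3. (c * P r (q * N1 + n))\<^sup>2)"
    using assms(1) by (simp add: sum_blocks[of _ N2 N3] X sq_if)
  also have "\<dots> = (\<Sum>q<N3. c\<^sup>2 * (L2_set (\<lambda>r. P r (q * N1 + n)) {..<N1 * N3})\<^sup>2)"
    by (subst sum.swap) (simp add: power_mult_distrib sum_distrib_left L2_set_def sum_nonneg)
  also have "\<dots> = real N3 * (c * s)\<^sup>2"
    by (simp add: col_norm power_mult_distrib)
  finally have frob_M: "frob (N1 * N3) (N2 * N3) (bcirc N1 N2 N3 M) = sqrt (real N3 * (c * s)\<^sup>2)"
    by (simp add: frob_def)
  have "tspec N1 N2 N3 M \<le> 1"
  proof -
    have "real N3 * (c * s)\<^sup>2 \<le> 1"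
      using assms(2) by (cases "s = 0") (simp_all add: c_def power_divide)
    then have "sqrt (real N3 * (c * s)\<^sup>2) \<le> 1"
      by simp
    then show ?thesis
      using opnorm_le_frob[of "N1 * N3" "N2 * N3" "bcirc N1 N2 N3 M"] frob_M
      unfolding tspec_def by linarith
  qed
  moreover have "s / sqrt (real N3) \<le> tinf N1 N2 N3 M"
  proof -
    have "M n 0 0 = c * P n n"
      using X[of 0 0 "0 * N1 + n"] bcirc_first_block_col[of n N1 0 N2 0 N3 M] assms by simp
    also have "\<dots> = c * s\<^sup>2"
      using proj_col_sq_sum[OF U, of n] proj_diag_nonneg[of "R * N3" "bcirc N1 R N3 U" n]
      by (simp add: P_def s_def L2_set_def)
    also have "\<dots> = s / sqrt (real N3)"
      by (cases "s = 0") (simp_all add: c_def power2_eq_square)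
    finally show ?thesis
      using abs_le_tinf[of n N1 0 N2 0 N3 M] assms by (simp add: s_def)
  qed
  ultimately show ?thesis
    using that \<open>M \<in> tangent N1 N2 N3 R U V\<close> by (simp add: s_def P_def)
qed

lemma tangent_ttrans:
  assumes "0 < N3" and "U \<in> tens N1 R N3" and "M \<in> tangent N2 N1 N3 R V U"
  shows "ttrans N2 N1 N3 M \<in> tangent N1 N2 N3 R U V"
proof -
  obtain Y W where Y: "Y \<in> tens N1 R N3" and W: "W \<in> tens N2 R N3"
    and M: "M = tadd (tprod N2 R N1 N3 V (ttrans N1 R N3 Y)) (tprod N2 R N1 N3 W (ttrans N1 R N3 U))"
    using assms(3) by (auto simp: tangent_def)
  have "ttrans N2 N1 N3 M = tadd (tprod N1 R N2 N3 U (ttrans N2 R N3 W)) (tprod N1 R N2 N3 Y (ttrans N2 R N3 V))"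
    using assms(1,2) Y by (simp add: M ttrans_tadd ttrans_tprod ttrans_ttrans tadd_def fun_eq_iff)
  then show ?thesis
    using W Y by (auto simp: tangent_def)
qed

lemma tangent_witness_right:
  assumes "0 < N1" and "0 < N3" and "U \<in> tens N1 R N3"
    and V: "orthonormal_cols (N2 * N3) (R * N3) (bcirc N2 R N3 V)" and "n < N2"
  obtains M where "M \<in> tangent N1 N2 N3 R U V" and "tspec N1 N2 N3 M \<le> 1"
    and "L2_set (\<lambda>l. proj (R * N3) (bcirc N2 R N3 V) l n) {..<N2 * N3} / sqrt (real N3) \<le> tinf N1 N2 N3 M"
proof -
  obtain M where "M \<in> tangent N2 N1 N3 R V U" and "tspec N2 N1 N3 M \<le> 1"
    and "L2_set (\<lambda>l. proj (R * N3) (bcirc N2 R N3 V) l n) {..<N2 * N3} / sqrt (real N3) \<le> tinf N2 N1 N3 M"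
    by (rule tangent_witness_left[OF assms(1,2) V assms(5)])
  then show ?thesis
    using that[of "ttrans N2 N1 N3 M"] assms(1-3)
    by (simp add: tangent_ttrans tspec_ttrans tinf_ttrans)
qed

lemma tinf_le_xi:
  assumes "0 < N1" and "0 < N2" and "0 < N3"
    and U: "orthonormal_cols (N1 * N3) (R * N3) (bcirc N1 R N3 U)"
    and V: "orthonormal_cols (N2 * N3) (R * N3) (bcirc N2 R N3 V)"
    and "M \<in> tangent N1 N2 N3 R U V" and "tspec N1 N2 N3 M \<le> 1"
  shows "tinf N1 N2 N3 M \<le> xi N1 N2 N3 R U V"
  unfolding xi_def
proof (rule cSup_upper)
  show "tinf N1 N2 N3 M \<in> {tinf N1 N2 N3 M | M. M \<in> tangent N1 N2 N3 R U V \<and> tspec N1 N2 N3 M \<le> 1}"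
    using assms(6,7) by blast
  show "bdd_above {tinf N1 N2 N3 M | M. M \<in> tangent N1 N2 N3 R U V \<and> tspec N1 N2 N3 M \<le> 1}"
    using tinf_le_beta_sum[OF assms(1-5)] by (intro bdd_aboveI) blast
qed

lemma xi_le_beta_sum:
  assumes "0 < N1" and "0 < N2" and "0 < N3"
    and U: "orthonormal_cols (N1 * N3) (R * N3) (bcirc N1 R N3 U)"
    and V: "orthonormal_cols (N2 * N3) (R * N3) (bcirc N2 R N3 V)"
  shows "xi N1 N2 N3 R U V \<le> beta N1 R N3 U + beta N2 R N3 V"
  unfolding xi_def
proof (rule cSup_least)
  obtain M where "M \<in> tangent N1 N2 N3 R U V" and "tspec N1 N2 N3 M \<le> 1"
    using tangent_witness_left[OF assms(2,3) U assms(1)] by blast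
  then show "{tinf N1 N2 N3 M | M. M \<in> tangent N1 N2 N3 R U V \<and> tspec N1 N2 N3 M \<le> 1} \<noteq> {}"
    by blast
next
  fix t
  assume "t \<in> {tinf N1 N2 N3 M | M. M \<in> tangent N1 N2 N3 R U V \<and> tspec N1 N2 N3 M \<le> 1}"
  then show "t \<le> beta N1 R N3 U + beta N2 R N3 V"
    using tinf_le_beta_sum[OF assms] by blast
qed

lemma beta_left_div_sqrt_le_xi:
  assumes "0 < N1" and "0 < N2" and "0 < N3"
    and U: "orthonormal_cols (N1 * N3) (R * N3) (bcirc N1 R N3 U)"
    and V: "orthonormal_cols (N2 * N3) (R * N3) (bcirc N2 R N3 V)"
  shows "beta N1 R N3 U / sqrt (real N3) \<le> xi N1 N2 N3 R U V"
proof -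
  obtain n where "n < N1"
    and beta: "beta N1 R N3 U = L2_set (\<lambda>l. proj (R * N3) (bcirc N1 R N3 U) l n) {..<N1 * N3}"
    by (rule beta_attained[OF assms(1,3)])
  obtain M where "M \<in> tangent N1 N2 N3 R U V" and "tspec N1 N2 N3 M \<le> 1"
    and "beta N1 R N3 U / sqrt (real N3) \<le> tinf N1 N2 N3 M"
    using tangent_witness_left[OF assms(2,3) U \<open>n < N1\<close>] unfolding beta .
  then show ?thesis
    using tinf_le_xi[OF assms] by (meson order_trans)
qed

lemma beta_right_div_sqrt_le_xi:
  assumes "0 < N1" and "0 < N2" and "0 < N3" and "U \<in> tens N1 R N3"
    and U: "orthonormal_cols (N1 * N3) (R * N3) (bcirc N1 R N3 U)"
    and V: "orthonormal_cols (N2 * N3) (R * N3) (bcirc N2 R N3 V)"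
  shows "beta N2 R N3 V / sqrt (real N3) \<le> xi N1 N2 N3 R U V"
proof -
  obtain n where "n < N2"
    and beta: "beta N2 R N3 V = L2_set (\<lambda>l. proj (R * N3) (bcirc N2 R N3 V) l n) {..<N2 * N3}"
    by (rule beta_attained[OF assms(2,3)])
  obtain M where "M \<in> tangent N1 N2 N3 R U V" and "tspec N1 N2 N3 M \<le> 1"
    and "beta N2 R N3 V / sqrt (real N3) \<le> tinf N1 N2 N3 M"
    using tangent_witness_right[OF assms(1,3,4) V \<open>n < N2\<close>] unfolding beta .
  then show ?thesis
    using tinf_le_xi[OF assms(1-3) U V] by (meson order_trans)
qed

theorem lemma3:
  fixes N1 N2 N3 R :: nat and L U S V :: tensor
  assumes "0 < N1" and "0 < N2" and "0 < N3"
    and "L \<in> tens N1 N2 N3"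
    and "skinny_tsvd N1 N2 N3 L R U S V"
  shows "inc N1 N2 N3 R U V / sqrt (real N3) \<le> xi N1 N2 N3 R U V \<and>
         xi N1 N2 N3 R U V \<le> 2 * inc N1 N2 N3 R U V"
proof -
  have U_tens: "U \<in> tens N1 R N3"
    and "tprod R N1 R N3 (ttrans N1 R N3 U) U = tident R N3"
    and "tprod R N2 R N3 (ttrans N2 R N3 V) V = tident R N3"
    using assms(5) unfolding skinny_tsvd_def by blast+
  then have U: "orthonormal_cols (N1 * N3) (R * N3) (bcirc N1 R N3 U)"
    and V: "orthonormal_cols (N2 * N3) (R * N3) (bcirc N2 R N3 V)"
    using assms(3) by (simp_all add: orthonormal_cols_bcirc)
  have "beta N1 R N3 U / sqrt (real N3) \<le> xi N1 N2 N3 R U V"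
    and "beta N2 R N3 V / sqrt (real N3) \<le> xi N1 N2 N3 R U V"
    and "xi N1 N2 N3 R U V \<le> beta N1 R N3 U + beta N2 R N3 V"
    using beta_left_div_sqrt_le_xi[OF assms(1-3) U V] beta_right_div_sqrt_le_xi[OF assms(1-3) U_tens U V]
      xi_le_beta_sum[OF assms(1-3) U V] .
  then show ?thesis
    unfolding inc_def by (cases "beta N1 R N3 U \<le> beta N2 R N3 V") (simp_all add: max_def)
qed

end
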